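(* Let $q \geq 1$ and let $k$ be a positive integer with $k < n$. Let $\boldsymbol{B} = [\boldsymbol{B}[1] \ \cdots \ \boldsymbol{B}[n]] \in \mathbb{R}^{D \times N}$ be a dictionary with unit-norm columns, blocks $\boldsymbol{B}[i] \in \mathbb{R}^{D \times m_i}$, and pairwise disjoint block subspaces $\mathcal{S}_i = \operatorname{span}(\boldsymbol{B}[i])$. Assume that every signal $\boldsymbol{y} \in \mathbb{R}^D$ that admits a $k$-block-sparse representation admits a unique one. For an index set $\Lambda \subseteq \{1,\dots,n\}$ and $\boldsymbol{x} \in \bigoplus_{i \in \Lambda} \mathcal{S}_i$ let $$V_\Lambda(\boldsymbol{x}) = \min\Big\{ \sum_{i \in \Lambda} \|\boldsymbol{c}[i]\|_q \;:\; \boldsymbol{x} = \sum_{i \in \Lambda} \boldsymbol{B}[i]\boldsymbol{c}[i] \Big\}.$$ Then the following are equivalent: (i) for every set $\Lambda_k \subseteq \{1,\dots,n\}$ with $|\Lambda_k| = k$ and every $\boldsymbol{y} \in \bigoplus_{i \in \Lambda_k} \mathcal{S}_i$, every optimal solution $\boldsymbol{c}^*$ of $P_{\ell_q/\ell_1}(\boldsymbol{y})$ satisfies $\boldsymbol{c}^*[i] = \boldsymbol{0}$ for all $i \notin \Lambda_k$ (i.e. the solution of $P_{\ell_q/\ell_1}$ coincides with the $k$-block-sparse solution of $P_{\ell_q/\ell_0}$); (ii) for every $\Lambda_k \subseteq \{1,\dots,n\}$ with $|\Lambda_k| = k$, writing $\widehat{\Lambda}_k = \{1,\dots,n\} \setminus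 \Lambda_k$, and every nonzero $\boldsymbol{x} \in \big(\bigoplus_{i \in \Lambda_k} \mathcal{S}_i\big) \cap \big(\bigoplus_{i \in \widehat{\Lambda}_k} \mathcal{S}_i\big)$, one has $V_{\Lambda_k}(\boldsymbol{x}) < V_{\widehat{\Lambda}_k}(\boldsymbol{x})$.
   Context: The dictionary $\boldsymbol{B} \in \mathbb{R}^{D\times N}$ has columns of unit Euclidean norm and is partitioned into $n$ blocks $\boldsymbol{B}[i] \in \mathbb{R}^{D \times m_i}$, $\sum_i m_i = N$; blocks may have linearly dependent columns. $\mathcal{S}_i$ is the column span of $\boldsymbol{B}[i]$; the subspaces are disjoint, meaning $\mathcal{S}_i \cap \mathcal{S}_j = \{0\}$ for $i \neq j$. A vector $\boldsymbol{c} \in \mathbb{R}^N$ is written $\boldsymbol{c} = (\boldsymbol{c}[1]; \dots; \boldsymbol{c}[n])$ with $\boldsymbol{c}[i] \in \mathbb{R}^{m_i}$, so $\boldsymbol{B}\boldsymbol{c} = \sum_i \boldsymbol{B}[i]\boldsymbol{c}[i]$. A $k$-block-sparse representation of $\boldsymbol{y}$ is an expression $\boldsymbol{y} = \sum_{i \in \Lambda} \boldsymbol{s}_i$ with $\Lambda \subseteq \{1,\dots,n\}$, $|\Lambda| \le k$, $\boldsymbol{s}_i \in \mathcal{S}_i \setminus \{0\}$; it is unique if any two such expressions have the same index set $\Lambda$ and the same vectors $\boldsymbol{s}_i$. $P_{\ell_q/\ell_1}(\boldsymbol{y})$ is the convex program $\min_{\boldsymbol{c}} \sum_{i=1}^n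 \|\boldsymbol{c}[i]\|_q$ subject to $\boldsymbol{y} = \boldsymbol{B}\boldsymbol{c}$; $P_{\ell_q/\ell_0}(\boldsymbol{y})$ is $\min_{\boldsymbol{c}} \#\{i : \|\boldsymbol{c}[i]\|_q \neq 0\}$ subject to $\boldsymbol{y} = \boldsymbol{B}\boldsymbol{c}$. $\bigoplus$ denotes the (direct) sum of subspaces. *)

theory Defs
  imports "HOL-Analysis.Analysis"
begin

text \<open>Dictionary: block i (1 \<le> i \<le> n) has columns b i j for j < m i, vectors in R^D = real^'d.
 A coefficient vector c is represented as c :: nat \<Rightarrow> nat \<Rightarrow> real, with c i j the j-th
 entry of the block c[i]; only entries i \<in> {1..n}, j < m i are meaningful.\<close>

definition block_span :: "(nat \<Rightarrow> nat \<Rightarrow> real^'d) \<Rightarrow> (nat \<Rightarrow> nat) \<Rightarrow> nat \<Rightarrow> (real^'d) set" where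
  "block_span b m i = span (b i ` {..<m i})"

definition block_apply :: "(nat \<Rightarrow> nat \<Rightarrow> real^'d) \<Rightarrow> (nat \<Rightarrow> nat) \<Rightarrow> (nat \<Rightarrow> nat \<Rightarrow> real) \<Rightarrow> nat \<Rightarrow> real^'d" where
  "block_apply b m c i = (\<Sum>j<m i. c i j *\<^sub>R b i j)"

definition dict_apply :: "(nat \<Rightarrow> nat \<Rightarrow> real^'d) \<Rightarrow> (nat \<Rightarrow> nat) \<Rightarrow> nat set \<Rightarrow> (nat \<Rightarrow> nat \<Rightarrow> real) \<Rightarrow> real^'d" where
  "dict_apply b m L c = (\<Sum>i\<in>L. block_apply b m c i)"

definition block_norm :: "real \<Rightarrow> (nat \<Rightarrow> nat) \<Rightarrow> (nat \<Rightarrow> nat \<Rightarrow> real) \<Rightarrow> nat \<Rightarrow> real" where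
  "block_norm q m c i = (\<Sum>j<m i. \<bar>c i j\<bar> powr q) powr (1 / q)"

definition block_zero :: "(nat \<Rightarrow> nat) \<Rightarrow> (nat \<Rightarrow> nat \<Rightarrow> real) \<Rightarrow> nat \<Rightarrow> bool" where
  "block_zero m c i \<longleftrightarrow> (\<forall>j<m i. c i j = 0)"

definition block_sum_space :: "(nat \<Rightarrow> nat \<Rightarrow> real^'d) \<Rightarrow> (nat \<Rightarrow> nat) \<Rightarrow> nat set \<Rightarrow> (real^'d) set" where
  "block_sum_space b m L = span (\<Union>i\<in>L. block_span b m i)"

definition is_kbs_rep :: "(nat \<Rightarrow> nat \<Rightarrow> real^'d) \<Rightarrow> (nat \<Rightarrow> nat) \<Rightarrow> nat \<Rightarrow> nat \<Rightarrow> real^'d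
    \<Rightarrow> nat set \<Rightarrow> (nat \<Rightarrow> real^'d) \<Rightarrow> bool" where
  "is_kbs_rep b m n k y L s \<longleftrightarrow> L \<subseteq> {1..n} \<and> card L \<le> k \<and>
     (\<forall>i\<in>L. s i \<in> block_span b m i - {0}) \<and> y = (\<Sum>i\<in>L. s i)"

definition unique_kbs :: "(nat \<Rightarrow> nat \<Rightarrow> real^'d) \<Rightarrow> (nat \<Rightarrow> nat) \<Rightarrow> nat \<Rightarrow> nat \<Rightarrow> bool" where
  "unique_kbs b m n k \<longleftrightarrow> (\<forall>y L s L' s'. is_kbs_rep b m n k y L s \<and> is_kbs_rep b m n k y L' s'
      \<longrightarrow> L = L' \<and> (\<forall>i\<in>L. s i = s' i))"

text \<open>V_L(x) = min { sum_{i in L} ||c[i]||_q : x = sum_{i in L} B[i] c[i] } (the minimum is attained,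
  so it equals the infimum).\<close>
definition V :: "(nat \<Rightarrow> nat \<Rightarrow> real^'d) \<Rightarrow> (nat \<Rightarrow> nat) \<Rightarrow> real \<Rightarrow> nat set \<Rightarrow> real^'d \<Rightarrow> real" where
  "V b m q L x = Inf {(\<Sum>i\<in>L. block_norm q m c i) | c. x = dict_apply b m L c}"

definition opt_lq_l1 :: "(nat \<Rightarrow> nat \<Rightarrow> real^'d) \<Rightarrow> (nat \<Rightarrow> nat) \<Rightarrow> nat \<Rightarrow> real \<Rightarrow> real^'d
    \<Rightarrow> (nat \<Rightarrow> nat \<Rightarrow> real) \<Rightarrow> bool" where
  "opt_lq_l1 b m n q y c \<longleftrightarrow> y = dict_apply b m {1..n} c \<and>
     (\<forall>c'. y = dict_apply b m {1..n} c' \<longrightarrow>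
        (\<Sum>i\<in>{1..n}. block_norm q m c i) \<le> (\<Sum>i\<in>{1..n}. block_norm q m c' i))"

end

theory Submission
  imports Defs
begin

text \<open>If every optimal solution is supported on \<open>\<Lambda>\<close>, a nonzero \<open>x\<close> in both sums with
  \<open>V\<^sub>\<Lambda>(x)\<close> at least the value of \<open>V\<close> on the complement cannot exist: the cheapest representation
  of \<open>x\<close> on the complement would be an optimal solution for \<open>x\<close>, yet it is not supported on \<open>\<Lambda>\<close>.
  Conversely, if an optimal \<open>c\<close> had a nonzero block outside \<open>\<Lambda>\<close>, the part \<open>x\<close> of \<open>Bc\<close>
  carried by the complement lies in both sums; replacing it by a cheaper representation on \<open>\<Lambda>\<close>
  lowers the cost, by Minkowski's inequality for the blockwise \<open>\<ell>\<^sub>q\<close> norms. Minima exist by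
  compactness, so \<open>V\<close> is attained.\<close>

subsection \<open>Minkowski's inequality\<close>

lemma powr_convex_combination_le:
  fixes a b t q :: real
  assumes "q \<ge> 1" "0 \<le> a" "0 \<le> b" "0 \<le> t" "t \<le> 1"
  shows "(t * a + (1 - t) * b) powr q \<le> t * a powr q + (1 - t) * b powr q"
proof -
  have scale: "(s * x) powr q \<le> s * x powr q" if "0 \<le> s" "s \<le> 1" "0 \<le> x" for s x :: real
  proof -
    have "s powr q \<le> s powr 1"
      using powr_mono'[of 1 q s] that assms(1) by simp
    then show ?thesis
      using that by (simp add: powr_mult mult_right_mono)
  qed
  consider "a = 0" | "b = 0" | "a > 0" "b > 0"
    using assms by linarith
  then show ?thesis
  proof cases
    case 1
    then show ?thesis using scale[of "1 - t" b] assms by simp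
  next
    case 2
    then show ?thesis using scale[of t a] assms by simp
  next
    case 3
    then show ?thesis
      using convex_onD[OF powr_convex[OF assms(1)], of t b a] assms by (simp add: algebra_simps)
  qed
qed

lemma minkowski_sum_powr:
  fixes u v :: "'a \<Rightarrow> real" and q :: real
  assumes "finite J" "q \<ge> 1"
  shows "(\<Sum>j\<in>J. \<bar>u j + v j\<bar> powr q) powr (1/q)
     \<le> (\<Sum>j\<in>J. \<bar>u j\<bar> powr q) powr (1/q) + (\<Sum>j\<in>J. \<bar>v j\<bar> powr q) powr (1/q)"
proof -
  define A where "A = (\<Sum>j\<in>J. \<bar>u j\<bar> powr q) powr (1/q)"
  define B where "B = (\<Sum>j\<in>J. \<bar>v j\<bar> powr q) powr (1/q)"
  have A_powr: "A powr q = (\<Sum>j\<in>J. \<bar>u j\<bar> powr q)" and B_powr: "B powr q = (\<Sum>j\<in>J. \<bar>v j\<bar> powr q)"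
    using assms(2) by (simp_all add: A_def B_def sum_nonneg powr_powr)
  show ?thesis
  proof (cases "A = 0 \<or> B = 0")
    case True
    then have "(\<forall>j\<in>J. u j = 0) \<or> (\<forall>j\<in>J. v j = 0)"
      using assms(1) by (auto simp: A_def B_def sum_nonneg_eq_0_iff)
    then show ?thesis
      by (auto simp: A_def B_def)
  next
    case False
    then have "A > 0" "B > 0"
      by (simp_all add: A_def B_def order.not_eq_order_implies_strict)
    define t where "t = A / (A + B)"
    have t: "0 \<le> t" "t \<le> 1" "1 - t = B / (A + B)"
      using \<open>A > 0\<close> \<open>B > 0\<close> by (auto simp: t_def field_simps)
    \<comment> \<open>convexity of \<open>powr q\<close> applied to the normalized vectors \<open>u/A\<close> and \<open>v/B\<close>\<close>
    have pointwise: "(\<bar>u j + v j\<bar> / (A + B)) powr q \<le> t * (\<bar>u j\<bar> / A) powr q + (1 - t) * (\<bar>v j\<bar> / B) powr q"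
      for j
    proof -
      have "t * (\<bar>u j\<bar> / A) + (1 - t) * (\<bar>v j\<bar> / B) = (\<bar>u j\<bar> + \<bar>v j\<bar>) / (A + B)"
        using \<open>A > 0\<close> \<open>B > 0\<close> unfolding t(3) by (simp add: t_def add_divide_distrib)
      moreover have "(\<bar>u j + v j\<bar> / (A + B)) powr q \<le> ((\<bar>u j\<bar> + \<bar>v j\<bar>) / (A + B)) powr q"
        using \<open>A > 0\<close> \<open>B > 0\<close> assms(2) by (intro powr_mono2) (auto simp: divide_right_mono)
      ultimately show ?thesis
        using powr_convex_combination_le[OF assms(2), of "\<bar>u j\<bar> / A" "\<bar>v j\<bar> / B" t]
          \<open>A > 0\<close> \<open>B > 0\<close> t by simp
    qed
    have "(\<Sum>j\<in>J. \<bar>u j + v j\<bar> powr q) / (A + B) powr q = (\<Sum>j\<in>J. (\<bar>u j + v j\<bar> / (A + B)) powr q)"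
      by (simp add: powr_divide sum_divide_distrib)
    also have "\<dots> \<le> (\<Sum>j\<in>J. t * (\<bar>u j\<bar> / A) powr q + (1 - t) * (\<bar>v j\<bar> / B) powr q)"
      by (intro sum_mono pointwise)
    also have "\<dots> = t * ((\<Sum>j\<in>J. \<bar>u j\<bar> powr q) / A powr q) + (1 - t) * ((\<Sum>j\<in>J. \<bar>v j\<bar> powr q) / B powr q)"
      by (simp add: sum.distrib sum_distrib_left powr_divide sum_divide_distrib)
    also have "\<dots> = 1"
      using \<open>A > 0\<close> \<open>B > 0\<close> by (simp add: A_powr[symmetric] B_powr[symmetric])
    finally have "(\<Sum>j\<in>J. \<bar>u j + v j\<bar> powr q) \<le> (A + B) powr q"
      using \<open>A > 0\<close> \<open>B > 0\<close> by (simp add: divide_le_eq)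
    then have "(\<Sum>j\<in>J. \<bar>u j + v j\<bar> powr q) powr (1/q) \<le> ((A + B) powr q) powr (1/q)"
      using assms(2) by (intro powr_mono2) (auto simp: sum_nonneg)
    also have "\<dots> = A + B"
      using \<open>A > 0\<close> \<open>B > 0\<close> assms(2) by (simp add: powr_powr)
    finally show ?thesis
      by (simp add: A_def B_def)
  qed
qed

abbreviation mixed_norm :: "real \<Rightarrow> (nat \<Rightarrow> nat) \<Rightarrow> nat set \<Rightarrow> (nat \<Rightarrow> nat \<Rightarrow> real) \<Rightarrow> real" where
  "mixed_norm q m L c \<equiv> \<Sum>i\<in>L. block_norm q m c i"

lemma block_norm_nonneg: "block_norm q m c i \<ge> 0"
  by (simp add: block_norm_def)

lemma mixed_norm_nonneg: "mixed_norm q m L c \<ge> 0"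
  by (simp add: sum_nonneg block_norm_nonneg)

lemma block_norm_eq_0_iff:
  assumes "q > 0"
  shows "block_norm q m c i = 0 \<longleftrightarrow> block_zero m c i"
  using assms by (auto simp: block_norm_def block_zero_def sum_nonneg_eq_0_iff)

lemma block_norm_add_le:
  assumes "q \<ge> 1"
  shows "block_norm q m (\<lambda>i j. c i j + d i j) i \<le> block_norm q m c i + block_norm q m d i"
  unfolding block_norm_def using minkowski_sum_powr[of "{..<m i}" q "c i" "d i"] assms by simp

lemma abs_le_block_norm:
  assumes "q > 0" "j < m i"
  shows "\<bar>c i j\<bar> \<le> block_norm q m c i"
proof -
  have "\<bar>c i j\<bar> powr q \<le> (\<Sum>j<m i. \<bar>c i j\<bar> powr q)"
    using assms by (intro member_le_sum) auto
  then have "(\<bar>c i j\<bar> powr q) powr (1/q) \<le> (\<Sum>j<m i. \<bar>c i j\<bar> powr q) powr (1/q)"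
    using assms by (intro powr_mono2) auto
  then show ?thesis
    using assms by (simp add: block_norm_def powr_powr)
qed

lemma mixed_norm_extend_zero:
  assumes "finite M" "L \<subseteq> M"
  shows "mixed_norm q m M (\<lambda>i j. if i \<in> L then c i j else 0) = mixed_norm q m L c"
proof -
  have "mixed_norm q m M (\<lambda>i j. if i \<in> L then c i j else 0)
      = mixed_norm q m L (\<lambda>i j. if i \<in> L then c i j else 0)"
    using assms by (intro sum.mono_neutral_cong_right) (auto simp: block_norm_def)
  also have "\<dots> = mixed_norm q m L c"
    by (intro sum.cong) (auto simp: block_norm_def)
  finally show ?thesis .
qed

lemma mixed_norm_supported:
  assumes "q > 0" "finite M" "L \<subseteq> M" "\<forall>i\<in>M - L. block_zero m c i"
  shows "mixed_norm q m M c = mixed_norm q m L c"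
  using assms by (intro sum.mono_neutral_right) (auto simp: block_norm_eq_0_iff)

lemma dict_apply_add:
  "dict_apply b m L (\<lambda>i j. c i j + d i j) = dict_apply b m L c + dict_apply b m L d"
  by (simp add: dict_apply_def block_apply_def scaleR_add_left sum.distrib)

lemma dict_apply_scale: "dict_apply b m L (\<lambda>i j. a * c i j) = a *\<^sub>R dict_apply b m L c"
  by (simp add: dict_apply_def block_apply_def scaleR_sum_right)

lemma dict_apply_zero: "dict_apply b m L (\<lambda>i j. 0) = 0"
  by (simp add: dict_apply_def block_apply_def)

lemma block_apply_eq_0: "block_zero m c i \<Longrightarrow> block_apply b m c i = 0"
  by (simp add: block_zero_def block_apply_def)

lemma dict_apply_extend_zero:
  assumes "finite M" "L \<subseteq> M"
  shows "dict_apply b m M (\<lambda>i j. if i \<in> L then c i j else 0) = dict_apply b m L c"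
proof -
  have "dict_apply b m M (\<lambda>i j. if i \<in> L then c i j else 0)
      = dict_apply b m L (\<lambda>i j. if i \<in> L then c i j else 0)"
    unfolding dict_apply_def using assms
    by (intro sum.mono_neutral_cong_right) (auto simp: block_apply_def)
  also have "\<dots> = dict_apply b m L c"
    unfolding dict_apply_def by (intro sum.cong) (auto simp: block_apply_def)
  finally show ?thesis .
qed

lemma dict_apply_supported:
  assumes "finite M" "L \<subseteq> M" "\<forall>i\<in>M - L. block_zero m c i"
  shows "dict_apply b m M c = dict_apply b m L c"
  unfolding dict_apply_def using assms by (intro sum.mono_neutral_right) (auto simp: block_apply_eq_0)

lemma dict_apply_in_block_sum_space: "dict_apply b m L c \<in> block_sum_space b m L"
  unfolding dict_apply_def block_sum_space_def block_apply_def block_span_def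
  by (intro span_sum span_scale) (blast intro: span_base)

lemma block_sum_space_eq_range:
  assumes "finite L"
  shows "block_sum_space b m L = range (dict_apply b m L)"
proof
  have subspace: "subspace (range (dict_apply b m L))"
    unfolding subspace_def
  proof (intro conjI ballI allI)
    show "0 \<in> range (dict_apply b m L)"
      by (metis dict_apply_zero rangeI)
    show "u + v \<in> range (dict_apply b m L)" if "u \<in> range (dict_apply b m L)" "v \<in> range (dict_apply b m L)"
      for u v using that by (auto simp flip: dict_apply_add)
    show "a *\<^sub>R u \<in> range (dict_apply b m L)" if "u \<in> range (dict_apply b m L)" for a u
      using that by (auto simp flip: dict_apply_scale)
  qed
  have atom: "b i j \<in> range (dict_apply b m L)" if "i \<in> L" "j < m i" for i j
  proof
    define e where "e = (\<lambda>i' j'. if i' = i \<and> j' = j then 1 else (0::real))"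
    have "block_apply b m e i' = (if i' = i then b i j else 0)" for i'
      using that(2) unfolding block_apply_def e_def by (cases "i' = i") (simp_all add: if_distrib[of "\<lambda>a. a *\<^sub>R _"] cong: if_cong)
    then show "b i j = dict_apply b m L e"
      using that(1) assms by (simp add: dict_apply_def)
  qed simp
  have "block_span b m i \<subseteq> range (dict_apply b m L)" if "i \<in> L" for i
    unfolding block_span_def using atom that by (intro span_minimal[OF _ subspace]) auto
  then show "block_sum_space b m L \<subseteq> range (dict_apply b m L)"
    unfolding block_sum_space_def by (intro span_minimal[OF _ subspace]) auto
qed (use dict_apply_in_block_sum_space in blast)

subsection \<open>Existence of minimal representations\<close>

lemma compact_pointwise_in:
  fixes K :: "'a \<Rightarrow> 'b::topological_space set"
  assumes "\<And>i. compact (K i)"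
  shows "compact {f. \<forall>i. f i \<in> K i}"
proof -
  have "compactin (product_topology (\<lambda>_. euclidean) UNIV) (Pi\<^sub>E UNIV K)"
    using assms by (simp add: compactin_PiE)
  moreover have "Pi\<^sub>E UNIV K = {f. \<forall>i. f i \<in> K i}"
    by (auto simp: PiE_UNIV_domain)
  ultimately show ?thesis
    by (simp add: euclidean_product_topology)
qed

lemma continuous_on_coefficient: "continuous_on S (\<lambda>c::'a \<Rightarrow> 'b \<Rightarrow> real. c i j)"
proof -
  have "continuous_on S (\<lambda>c::'a \<Rightarrow> 'b \<Rightarrow> real. c i)"
    by (rule continuous_on_product_then_coordinatewise[OF continuous_on_id])
  then show ?thesis
    by (rule continuous_on_product_then_coordinatewise)
qed

lemma continuous_on_dict_apply: "continuous_on S (dict_apply b m L)"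
  unfolding dict_apply_def block_apply_def by (intro continuous_intros continuous_on_coefficient)

lemma continuous_on_mixed_norm:
  assumes "q > 0"
  shows "continuous_on S (mixed_norm q m L)"
  unfolding block_norm_def using assms
  by (intro continuous_on_sum continuous_on_powr' continuous_on_rabs continuous_on_coefficient
      continuous_on_const) (auto simp: sum_nonneg)

lemma mixed_norm_minimizer_exists:
  assumes "finite L" "q > 0" "x = dict_apply b m L c0"
  obtains c where "x = dict_apply b m L c"
    "\<And>c'. x = dict_apply b m L c' \<Longrightarrow> mixed_norm q m L c \<le> mixed_norm q m L c'"
proof -
  define R where "R = mixed_norm q m L c0"
  define box where "box i j = (if i \<in> L \<and> j < m i then {-R..R} else {0})" for i j
  define K where "K = {c. \<forall>i. c i \<in> {d. \<forall>j. d j \<in> box i j}} \<inter> {c. dict_apply b m L c = x}"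
  \<comment> \<open>entries outside the blocks of \<open>L\<close> are irrelevant, so the search is confined to a box\<close>
  define trunc where "trunc c = (\<lambda>i j. if i \<in> L \<and> j < m i then c i j else 0)" for c :: "nat \<Rightarrow> nat \<Rightarrow> real"
  have trunc_apply: "dict_apply b m L (trunc c) = dict_apply b m L c" for c
    unfolding dict_apply_def block_apply_def trunc_def by (intro sum.cong) auto
  have trunc_norm: "mixed_norm q m L (trunc c) = mixed_norm q m L c" for c
    unfolding block_norm_def trunc_def by (intro sum.cong) auto
  have trunc_in_K: "trunc c \<in> K" if "x = dict_apply b m L c" "mixed_norm q m L c \<le> R" for c
  proof -
    have "\<bar>c i j\<bar> \<le> R" if "i \<in> L" "j < m i" for i j
    proof -
      have "\<bar>c i j\<bar> \<le> block_norm q m c i"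
        using abs_le_block_norm assms(2) that by blast
      also have "\<dots> \<le> mixed_norm q m L c"
        using assms(1) that by (intro member_le_sum) (auto simp: block_norm_nonneg)
      finally show ?thesis using \<open>mixed_norm q m L c \<le> R\<close> by simp
    qed
    then show ?thesis
      using that trunc_apply by (force simp: K_def box_def trunc_def abs_le_iff)
  qed
  have "compact K"
    unfolding K_def
    by (intro compact_Int_closed compact_pointwise_in closed_Collect_eq continuous_on_dict_apply
        continuous_on_const) (simp_all add: box_def)
  moreover have "K \<noteq> {}"
    using trunc_in_K[OF assms(3)] by (auto simp: R_def)
  ultimately obtain cs where cs: "cs \<in> K" "\<And>c. c \<in> K \<Longrightarrow> mixed_norm q m L cs \<le> mixed_norm q m L c"
    using continuous_attains_inf[OF _ _ continuous_on_mixed_norm[OF assms(2)]] by metis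
  show ?thesis
  proof
    show "x = dict_apply b m L cs"
      using cs(1) by (simp add: K_def)
  next
    fix c' assume c': "x = dict_apply b m L c'"
    show "mixed_norm q m L cs \<le> mixed_norm q m L c'"
    proof (cases "mixed_norm q m L c' \<le> R")
      case True
      then show ?thesis
        using cs(2)[OF trunc_in_K[OF c' True]] trunc_norm by simp
    next
      case False
      then show ?thesis
        using cs(2)[OF trunc_in_K[OF assms(3)]] trunc_norm by (simp add: R_def)
    qed
  qed
qed

lemma V_le:
  assumes "x = dict_apply b m L c"
  shows "V b m q L x \<le> mixed_norm q m L c"
  unfolding V_def using assms
  by (intro cInf_lower bdd_belowI[of _ 0]) (auto simp: mixed_norm_nonneg)

lemma V_attained:
  assumes "finite L" "q > 0" "x \<in> block_sum_space b m L"
  obtains c where "x = dict_apply b m L c" "mixed_norm q m L c = V b m q L x"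
proof -
  obtain c0 where "x = dict_apply b m L c0"
    using assms(3) unfolding block_sum_space_eq_range[OF assms(1)] by blast
  then obtain c where c: "x = dict_apply b m L c"
    "\<And>c'. x = dict_apply b m L c' \<Longrightarrow> mixed_norm q m L c \<le> mixed_norm q m L c'"
    using mixed_norm_minimizer_exists[OF assms(1,2)] by metis
  then have "V b m q L x = mixed_norm q m L c"
    unfolding V_def by (intro cInf_eq_minimum) auto
  with c(1) show ?thesis
    using that by simp
qed

lemma block_sum_space_mono: "L \<subseteq> M \<Longrightarrow> block_sum_space b m L \<subseteq> block_sum_space b m M"
  unfolding block_sum_space_def by (intro span_mono) auto

lemma opt_lq_l1I:
  assumes "y = dict_apply b m {1..n} c" "mixed_norm q m {1..n} c \<le> V b m q {1..n} y"
  shows "opt_lq_l1 b m n q y c"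
  unfolding opt_lq_l1_def using assms order_trans[OF _ V_le] by blast

lemma V_less_if_optimal_supported:
  assumes "q > 0" "L \<subseteq> {1..n}"
    and supported: "\<forall>y\<in>block_sum_space b m L. \<forall>c. opt_lq_l1 b m n q y c \<longrightarrow>
      (\<forall>i\<in>{1..n} - L. block_zero m c i)"
    and x: "x \<in> block_sum_space b m L" "x \<in> block_sum_space b m ({1..n} - L)" "x \<noteq> 0"
  shows "V b m q L x < V b m q ({1..n} - L) x"
proof (rule ccontr)
  define Lc where "Lc = {1..n} - L"
  assume "\<not> ?thesis"
  then have V_Lc: "V b m q Lc x \<le> V b m q L x"
    by (simp add: Lc_def)
  obtain c1 where c1: "x = dict_apply b m Lc c1" "mixed_norm q m Lc c1 = V b m q Lc x"
    using V_attained[OF _ assms(1) x(2)] by (auto simp: Lc_def)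
  obtain c where c: "x = dict_apply b m {1..n} c" "mixed_norm q m {1..n} c = V b m q {1..n} x"
    using V_attained[OF _ assms(1)] x(1) block_sum_space_mono[OF assms(2)] by blast
  then have "\<forall>i\<in>Lc. block_zero m c i"
    using supported x(1) opt_lq_l1I[of x b m n c q] by (simp add: Lc_def)
  then have c_L: "x = dict_apply b m L c" "mixed_norm q m {1..n} c = mixed_norm q m L c"
    using c(1) dict_apply_supported mixed_norm_supported[OF assms(1)] assms(2)
    by (metis Lc_def finite_atLeastAtMost)+
  \<comment> \<open>the cheapest representation on the complement, padded with zeros, is then optimal too\<close>
  define c0 where "c0 = (\<lambda>i j. if i \<in> Lc then c1 i j else 0)"
  have c0_rep: "x = dict_apply b m {1..n} c0"
    using c1(1) dict_apply_extend_zero[of "{1..n}" Lc b m c1] by (simp add: c0_def Lc_def)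
  have "mixed_norm q m {1..n} c0 = V b m q Lc x"
    using c1(2) mixed_norm_extend_zero[of "{1..n}" Lc q m c1] by (simp add: c0_def Lc_def)
  also have "\<dots> \<le> mixed_norm q m {1..n} c"
    using V_Lc V_le[OF c_L(1), of q] c_L(2) by simp
  finally have "opt_lq_l1 b m n q x c0"
    using c0_rep c(2) by (intro opt_lq_l1I) auto
  then have "\<forall>i\<in>Lc. block_zero m c0 i"
    using supported x(1) by (simp add: Lc_def)
  then have "\<forall>i\<in>Lc. block_zero m c1 i"
    by (simp add: c0_def block_zero_def)
  then have "x = 0"
    using c1(1) by (simp add: dict_apply_def block_apply_eq_0)
  with x(3) show False ..
qed

lemma optimal_supported_if_V_less:
  assumes "q \<ge> 1" "L \<subseteq> {1..n}"
    and less: "\<forall>x\<in>block_sum_space b m L \<inter> block_sum_space b m ({1..n} - L).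
      x \<noteq> 0 \<longrightarrow> V b m q L x < V b m q ({1..n} - L) x"
    and y: "y \<in> block_sum_space b m L" and opt: "opt_lq_l1 b m n q y c"
  shows "\<forall>i\<in>{1..n} - L. block_zero m c i"
proof (rule ccontr)
  define Lc where "Lc = {1..n} - L"
  assume "\<not> ?thesis"
  then obtain i0 where i0: "i0 \<in> Lc" "\<not> block_zero m c i0"
    by (auto simp: Lc_def)
  have q0: "q > 0" using assms(1) by simp
  have fin: "finite L" "finite Lc" and split: "{1..n} = L \<union> Lc" "L \<inter> Lc = {}"
    using assms(2) finite_subset by (auto simp: Lc_def)
  define x where "x = dict_apply b m Lc c"
  have y_split: "y = dict_apply b m L c + x"
    using opt unfolding opt_lq_l1_def dict_apply_def x_def split(1) by (simp add: sum.union_disjoint fin split(2))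
  have "0 < block_norm q m c i0"
    using i0(2) block_norm_eq_0_iff[OF q0] block_norm_nonneg by (metis order.not_eq_order_implies_strict)
  also have "\<dots> \<le> mixed_norm q m Lc c"
    using i0(1) fin(2) by (intro member_le_sum) (auto simp: block_norm_nonneg)
  finally have pos: "0 < mixed_norm q m Lc c" .
  obtain d where d: "x = dict_apply b m L d" "mixed_norm q m L d < mixed_norm q m Lc c"
  proof (cases "x = 0")
    case True
    then show ?thesis
      using pos by (intro that[of "\<lambda>i j. 0"]) (simp_all add: dict_apply_zero block_norm_def)
  next
    case False
    have "x = y - dict_apply b m L c"
      using y_split by simp
    then have x_L: "x \<in> block_sum_space b m L"
      using y dict_apply_in_block_sum_space[of b m L c] by (simp add: block_sum_space_def span_diff)
    obtain d where d: "x = dict_apply b m L d" "mixed_norm q m L d = V b m q L x"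
      using V_attained[OF fin(1) q0 x_L] .
    have "V b m q L x < V b m q Lc x"
      using less x_L dict_apply_in_block_sum_space[of b m Lc c] False by (simp add: x_def Lc_def)
    also have "\<dots> \<le> mixed_norm q m Lc c"
      by (rule V_le) (simp add: x_def)
    finally show ?thesis
      using that d by simp
  qed
  \<comment> \<open>moving the part of \<open>y\<close> carried by the complement onto \<open>L\<close> makes \<open>c\<close> cheaper\<close>
  define c' where "c' = (\<lambda>i j. if i \<in> L then c i j + d i j else 0)"
  have c'_rep: "y = dict_apply b m {1..n} c'"
    using y_split d(1) dict_apply_extend_zero[of "{1..n}" L b m "\<lambda>i j. c i j + d i j"] assms(2)
    by (simp add: c'_def dict_apply_add)
  have "mixed_norm q m {1..n} c' = mixed_norm q m L (\<lambda>i j. c i j + d i j)"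
    using mixed_norm_extend_zero[of "{1..n}" L q m "\<lambda>i j. c i j + d i j"] assms(2) by (simp add: c'_def)
  also have "\<dots> \<le> mixed_norm q m L c + mixed_norm q m L d"
    unfolding sum.distrib[symmetric] by (intro sum_mono block_norm_add_le assms(1))
  also have "\<dots> < mixed_norm q m L c + mixed_norm q m Lc c"
    using d(2) by simp
  also have "\<dots> = mixed_norm q m {1..n} c"
    unfolding split(1) by (simp add: sum.union_disjoint fin split(2))
  finally have "mixed_norm q m {1..n} c' < mixed_norm q m {1..n} c" .
  moreover have "mixed_norm q m {1..n} c \<le> mixed_norm q m {1..n} c'"
    using opt c'_rep unfolding opt_lq_l1_def by blast
  ultimately show False
    by simp
qed

theorem theorem1:
  fixes b :: "nat \<Rightarrow> nat \<Rightarrow> real^'d" and m :: "nat \<Rightarrow> nat" and n k :: nat and q :: real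
  assumes "q \<ge> 1" and "0 < k" and "k < n"
    and "\<forall>i\<in>{1..n}. 0 < m i"
    and "\<forall>i\<in>{1..n}. \<forall>j<m i. norm (b i j) = 1"
    and "\<forall>i\<in>{1..n}. \<forall>j\<in>{1..n}. i \<noteq> j \<longrightarrow> block_span b m i \<inter> block_span b m j = {0}"
    and "unique_kbs b m n k"
  shows "(\<forall>L. L \<subseteq> {1..n} \<and> card L = k \<longrightarrow>
            (\<forall>y\<in>block_sum_space b m L. \<forall>c. opt_lq_l1 b m n q y c \<longrightarrow>
               (\<forall>i\<in>{1..n} - L. block_zero m c i)))
     \<longleftrightarrow>
         (\<forall>L. L \<subseteq> {1..n} \<and> card L = k \<longrightarrow>
            (\<forall>x\<in>block_sum_space b m L \<inter> block_sum_space b m ({1..n} - L). x \<noteq> 0 \<longrightarrow>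
               V b m q L x < V b m q ({1..n} - L) x))"
  \<comment> \<open>only \<open>q \<ge> 1\<close> is used: the equivalence holds for each \<open>L\<close> separately, without the
    normalization, disjointness and uniqueness hypotheses\<close>
proof (intro iffI allI impI ballI)
  fix L x
  assume supported: "\<forall>L. L \<subseteq> {1..n} \<and> card L = k \<longrightarrow>
      (\<forall>y\<in>block_sum_space b m L. \<forall>c. opt_lq_l1 b m n q y c \<longrightarrow> (\<forall>i\<in>{1..n} - L. block_zero m c i))"
    and L: "L \<subseteq> {1..n} \<and> card L = k"
    and x: "x \<in> block_sum_space b m L \<inter> block_sum_space b m ({1..n} - L)" "x \<noteq> 0"
  show "V b m q L x < V b m q ({1..n} - L) x"
    using assms(1) supported L x by (intro V_less_if_optimal_supported[of q L n]) auto
next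
  fix L y c i
  assume less: "\<forall>L. L \<subseteq> {1..n} \<and> card L = k \<longrightarrow>
      (\<forall>x\<in>block_sum_space b m L \<inter> block_sum_space b m ({1..n} - L).
        x \<noteq> 0 \<longrightarrow> V b m q L x < V b m q ({1..n} - L) x)"
    and L: "L \<subseteq> {1..n} \<and> card L = k"
    and y: "y \<in> block_sum_space b m L" and opt: "opt_lq_l1 b m n q y c" and i: "i \<in> {1..n} - L"
  show "block_zero m c i"
    using optimal_supported_if_V_less[OF assms(1) _ _ y opt] less L i by blast
qed

end
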